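(* (1) If $A$ and $B$ are nonpos and $\Psi \vdash A \le^{+} B$, then $\Psi \vdash A \le^{-} B$ by a derivation of the same or smaller size. (2) If $A$ and $B$ are nonneg and $\Psi \vdash A \le^{-} B$, then $\Psi \vdash A \le^{+} B$ by a derivation of the same or smaller size. (3) If $A$ and $B$ are each both nonpos and nonneg, and $\Psi \vdash A \le^{\pm} B$ (for some polarity $\pm$), then $A = B$.
   Context: Sorts are $\kappa \in \{\mathsf{type}, \mathbb{N}\}$. Index terms/monotypes $\tau, t$ are built from $\mathbf{1}$, universal variables $\alpha$, binary connectives $\tau_1 \oplus \tau_2$ with $\oplus \in \{\to, +, \times\}$ (sort $\mathsf{type}$), and $\mathsf{zero}$, $\mathsf{succ}(t)$ (sort $\mathbb{N}$); $\Psi \vdash t : \kappa$ means $t$ has sort $\kappa$ with its variables declared in $\Psi$. Types are $A, B ::= \mathbf{1} \mid \alpha \mid A \oplus B \mid \forall \alpha{:}\kappa.\,A \mid \exists \alpha{:}\kappa.\,A \mid P \supset A \mid A \wedge P \mid \mathsf{Vec}\ t\ A$ with propositions $P ::= t = t'$. A declarative context $\Psi$ is a list of declarations including universal variables $\alpha:\kappa$. A type is positive if headed by $\exists$, negative if headed by $\forall$; nonpos = not positive, nonneg = not negative. The size of a derivation is its number of rule applications. Declarative subtyping $\Psi \vdash A \le^{\pm} B$ is inductively defined by: (Refl) if $\Psi \vdash A\ \mathsf{type}$ and $A$ is nonpos and nonneg then $\Psi \vdash A \le^{\pm} A$; ($\forall$L) $\Psi \vdash \tau : \kappa$ and $\Psi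 \vdash [\tau/\alpha]A \le^- B$ give $\Psi \vdash \forall\alpha{:}\kappa.A \le^- B$; ($\forall$R) $\Psi, \beta{:}\kappa \vdash A \le^- B$ gives $\Psi \vdash A \le^- \forall\beta{:}\kappa.B$; ($\exists$L) $\Psi, \alpha{:}\kappa \vdash A \le^+ B$ gives $\Psi \vdash \exists\alpha{:}\kappa.A \le^+ B$; ($\exists$R) $\Psi \vdash \tau:\kappa$ and $\Psi \vdash A \le^+ [\tau/\beta]B$ give $\Psi \vdash A \le^+ \exists\beta{:}\kappa.B$; ($-{+}$) $\Psi \vdash A \le^- B$ with $A,B$ nonpos gives $\Psi \vdash A \le^+ B$; ($+{-}$) $\Psi \vdash A \le^+ B$ with $A,B$ nonneg gives $\Psi \vdash A \le^- B$. *)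

theory Defs
  imports Main
begin

text \<open>Index terms / monotypes are the
  subset of types built from Unit, variables, binary connectives, Zero, Succ.
  A declarative context is a list of sorts of universal variables; the head
  of the list is the most recently declared variable (index 0).\<close>

datatype sort = SType | SNat

datatype bop = Arrow | Plus | Times

datatype ty =
    Unit
  | TVar nat
  | Bin bop ty ty
  | All sort ty
  | Ex sort ty
  | Imp propn ty
  | With ty propn
  | Vec ty ty
  | Zero
  | Succ ty
and propn = Eq ty ty

type_synonym ctx = "sort list"

fun shift :: "nat \<Rightarrow> ty \<Rightarrow> ty" and shiftp :: "nat \<Rightarrow> propn \<Rightarrow> propn" where
  "shift c Unit = Unit"
| "shift c (TVar i) = TVar (if i < c then i else Suc i)"
| "shift c (Bin op A B) = Bin op (shift c A) (shift c B)"
| "shift c (All k A) = All k (shift (Suc c) A)"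
| "shift c (Ex k A) = Ex k (shift (Suc c) A)"
| "shift c (Imp P A) = Imp (shiftp c P) (shift c A)"
| "shift c (With A P) = With (shift c A) (shiftp c P)"
| "shift c (Vec t A) = Vec (shift c t) (shift c A)"
| "shift c Zero = Zero"
| "shift c (Succ t) = Succ (shift c t)"
| "shiftp c (Eq t u) = Eq (shift c t) (shift c u)"

text \<open>Substitution of s for index j, removing the binder (indices > j decrease).
  The instantiation [\<tau>/\<alpha>]A of a binder body A is subst 0 \<tau> A.\<close>
fun subst :: "nat \<Rightarrow> ty \<Rightarrow> ty \<Rightarrow> ty" and substp :: "nat \<Rightarrow> ty \<Rightarrow> propn \<Rightarrow> propn" where
  "subst j s Unit = Unit"
| "subst j s (TVar i) = (if i = j then s else if j < i then TVar (i - 1) else TVar i)"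
| "subst j s (Bin op A B) = Bin op (subst j s A) (subst j s B)"
| "subst j s (All k A) = All k (subst (Suc j) (shift 0 s) A)"
| "subst j s (Ex k A) = Ex k (subst (Suc j) (shift 0 s) A)"
| "subst j s (Imp P A) = Imp (substp j s P) (subst j s A)"
| "subst j s (With A P) = With (subst j s A) (substp j s P)"
| "subst j s (Vec t A) = Vec (subst j s t) (subst j s A)"
| "subst j s Zero = Zero"
| "subst j s (Succ t) = Succ (subst j s t)"
| "substp j s (Eq t u) = Eq (subst j s t) (subst j s u)"

inductive sorting :: "ctx \<Rightarrow> ty \<Rightarrow> sort \<Rightarrow> bool" where
  SUnit: "sorting \<Psi> Unit SType"
| SVar: "i < length \<Psi> \<Longrightarrow> \<Psi> ! i = k \<Longrightarrow> sorting \<Psi> (TVar i) k"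
| SBin: "sorting \<Psi> t1 SType \<Longrightarrow> sorting \<Psi> t2 SType \<Longrightarrow> sorting \<Psi> (Bin op t1 t2) SType"
| SZero: "sorting \<Psi> Zero SNat"
| SSucc: "sorting \<Psi> t SNat \<Longrightarrow> sorting \<Psi> (Succ t) SNat"

inductive wf_prop :: "ctx \<Rightarrow> propn \<Rightarrow> bool" where
  "sorting \<Psi> t SNat \<Longrightarrow> sorting \<Psi> u SNat \<Longrightarrow> wf_prop \<Psi> (Eq t u)"

inductive wf_type :: "ctx \<Rightarrow> ty \<Rightarrow> bool" where
  WUnit: "wf_type \<Psi> Unit"
| WVar: "i < length \<Psi> \<Longrightarrow> \<Psi> ! i = SType \<Longrightarrow> wf_type \<Psi> (TVar i)"
| WBin: "wf_type \<Psi> A \<Longrightarrow> wf_type \<Psi> B \<Longrightarrow> wf_type \<Psi> (Bin op A B)"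
| WAll: "wf_type (k # \<Psi>) A \<Longrightarrow> wf_type \<Psi> (All k A)"
| WEx: "wf_type (k # \<Psi>) A \<Longrightarrow> wf_type \<Psi> (Ex k A)"
| WImp: "wf_prop \<Psi> P \<Longrightarrow> wf_type \<Psi> A \<Longrightarrow> wf_type \<Psi> (Imp P A)"
| WWith: "wf_prop \<Psi> P \<Longrightarrow> wf_type \<Psi> A \<Longrightarrow> wf_type \<Psi> (With A P)"
| WVec: "sorting \<Psi> t SNat \<Longrightarrow> wf_type \<Psi> A \<Longrightarrow> wf_type \<Psi> (Vec t A)"

definition positive :: "ty \<Rightarrow> bool" where
  "positive A \<longleftrightarrow> (\<exists>k B. A = Ex k B)"

definition negative :: "ty \<Rightarrow> bool" where
  "negative A \<longleftrightarrow> (\<exists>k B. A = All k B)"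

definition nonpos :: "ty \<Rightarrow> bool" where
  "nonpos A \<longleftrightarrow> \<not> positive A"

definition nonneg :: "ty \<Rightarrow> bool" where
  "nonneg A \<longleftrightarrow> \<not> negative A"

datatype pol = Pos | Neg

inductive sub :: "ctx \<Rightarrow> pol \<Rightarrow> ty \<Rightarrow> ty \<Rightarrow> nat \<Rightarrow> bool" where
  Refl: "wf_type \<Psi> A \<Longrightarrow> nonpos A \<Longrightarrow> nonneg A \<Longrightarrow> sub \<Psi> p A A 1"
| AllL: "sorting \<Psi> \<tau> k \<Longrightarrow> sub \<Psi> Neg (subst 0 \<tau> A) B n \<Longrightarrow> sub \<Psi> Neg (All k A) B (Suc n)"
| AllR: "sub (k # \<Psi>) Neg (shift 0 A) B n \<Longrightarrow> sub \<Psi> Neg A (All k B) (Suc n)"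
| ExL: "sub (k # \<Psi>) Pos A (shift 0 B) n \<Longrightarrow> sub \<Psi> Pos (Ex k A) B (Suc n)"
| ExR: "sorting \<Psi> \<tau> k \<Longrightarrow> sub \<Psi> Pos A (subst 0 \<tau> B) n \<Longrightarrow> sub \<Psi> Pos A (Ex k B) (Suc n)"
| NegPos: "sub \<Psi> Neg A B n \<Longrightarrow> nonpos A \<Longrightarrow> nonpos B \<Longrightarrow> sub \<Psi> Pos A B (Suc n)"
| PosNeg: "sub \<Psi> Pos A B n \<Longrightarrow> nonneg A \<Longrightarrow> nonneg B \<Longrightarrow> sub \<Psi> Neg A B (Suc n)"

end

theory Submission
  imports Defs
begin

text \<open>A derivation between two types that are not headed by \<open>\<exists>\<close> cannot end in
  \<open>\<exists>\<close>L or \<open>\<exists>\<close>R, so it ends in Refl (which also exists at the other polarity) or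
  in the polarity shift, whose premise is already the desired, smaller derivation.
  Dually for \<open>\<forall>\<close>. For types headed by neither quantifier only Refl and the two
  shifts remain, and the shifts do not change the types.\<close>

lemma not_nonpos_Ex [simp]: "\<not> nonpos (Ex k A)"
  by (simp add: nonpos_def positive_def)

lemma not_nonneg_All [simp]: "\<not> nonneg (All k A)"
  by (simp add: nonneg_def negative_def)

lemma sub_Pos_imp_Neg_nonpos:
  assumes "sub \<Psi> Pos A B n" and "nonpos A" and "nonpos B"
  shows "\<exists>m \<le> n. sub \<Psi> Neg A B m"
  using assms
proof (cases rule: sub.cases)
  case Refl
  then show ?thesis using sub.Refl[of \<Psi> A Neg] by auto
next
  case (NegPos m)
  then show ?thesis by (intro exI[of _ m]) simp
qed simp_all

lemma sub_Neg_imp_Pos_nonneg: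
  assumes "sub \<Psi> Neg A B n" and "nonneg A" and "nonneg B"
  shows "\<exists>m \<le> n. sub \<Psi> Pos A B m"
  using assms
proof (cases rule: sub.cases)
  case Refl
  then show ?thesis using sub.Refl[of \<Psi> A Pos] by auto
next
  case (PosNeg m)
  then show ?thesis by (intro exI[of _ m]) simp
qed simp_all

lemma sub_nonpos_nonneg_eq:
  assumes "sub \<Psi> p A B n"
    and "nonpos A" and "nonneg A" and "nonpos B" and "nonneg B"
  shows "A = B"
  using assms by (induction rule: sub.induct) simp_all

theorem mainTheorem3:
  shows "(\<forall>\<Psi> A B n. nonpos A \<and> nonpos B \<and> sub \<Psi> Pos A B n
            \<longrightarrow> (\<exists>m \<le> n. sub \<Psi> Neg A B m))
       \<and> (\<forall>\<Psi> A B n. nonneg A \<and> nonneg B \<and> sub \<Psi> Neg A B n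
            \<longrightarrow> (\<exists>m \<le> n. sub \<Psi> Pos A B m))
       \<and> (\<forall>\<Psi> p A B n. nonpos A \<and> nonneg A \<and> nonpos B \<and> nonneg B \<and> sub \<Psi> p A B n
            \<longrightarrow> A = B)"
  using sub_Pos_imp_Neg_nonpos sub_Neg_imp_Pos_nonneg sub_nonpos_nonneg_eq by blast

end
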